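(* Suppose $g(K_a,K_b)<(a-1)(b-1)$ for some positive integers $a$ and $b$. Then there is a constant $\beta<1$ such that $g(n)\le \beta n^2$ for all $n$.
   Context: $K_m$ is the complete graph on $m$ vertices. A complete bipartite subgraph of a graph $G$ has two disjoint nonempty vertex classes $X,Y$ and edge set all $xy$ with $x\in X,y\in Y$ (all edges of $G$). For graphs $G,H$, a block is a set $E(B_1)\times E(B_2)$ where $B_1$ is a complete bipartite subgraph of $G$ and $B_2$ is a complete bipartite subgraph of $H$; $g(G,H)$ is the minimum number of blocks whose union is $E(G)\times E(H)$ with the blocks pairwise disjoint, and $g(n)=g(K_n,K_n)$. *)

theory Defs
  imports Complex_Main
begin

text \<open>A graph is represented by its edge set (a set of 2-element vertex sets).\<close>

definition cbip_edges :: "'a set \<Rightarrow> 'a set \<Rightarrow> 'a set set" where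
  "cbip_edges X Y = {{x, y} | x y. x \<in> X \<and> y \<in> Y}"

definition is_cbip :: "'a set set \<Rightarrow> 'a set set \<Rightarrow> bool" where
  "is_cbip E F \<longleftrightarrow> (\<exists>X Y. X \<noteq> {} \<and> Y \<noteq> {} \<and> X \<inter> Y = {}
      \<and> cbip_edges X Y \<subseteq> E \<and> F = cbip_edges X Y)"

definition is_block :: "'a set set \<Rightarrow> 'b set set \<Rightarrow> ('a set \<times> 'b set) set \<Rightarrow> bool" where
  "is_block E1 E2 B \<longleftrightarrow> (\<exists>F1 F2. is_cbip E1 F1 \<and> is_cbip E2 F2 \<and> B = F1 \<times> F2)"

definition is_block_partition ::
  "'a set set \<Rightarrow> 'b set set \<Rightarrow> ('a set \<times> 'b set) set set \<Rightarrow> bool" where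
  "is_block_partition E1 E2 P \<longleftrightarrow> finite P \<and> (\<forall>B\<in>P. is_block E1 E2 B)
      \<and> pairwise disjnt P \<and> \<Union>P = E1 \<times> E2"

definition gGH :: "'a set set \<Rightarrow> 'b set set \<Rightarrow> nat" where
  "gGH E1 E2 = (LEAST k. \<exists>P. is_block_partition E1 E2 P \<and> card P = k)"

definition K_edges :: "nat \<Rightarrow> nat set set" where
  "K_edges m = {{i, j} | i j. i < m \<and> j < m \<and> i \<noteq> j}"

definition g :: "nat \<Rightarrow> nat" where
  "g n = gGH (K_edges n) (K_edges n)"

end

theory Submission
  imports Defs
begin

text \<open>Multiplying star partitions of K_V and K_W partitions E(K_V) \<times> E(K_W) into
  (|V| - 1)(|W| - 1) blocks. Splitting W into disjoint parts W1 and B splits E(K_W) into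
  E(K_W1), E(K_B) and one complete bipartite graph, so block partitions of the three products
  with E(K_V) combine and their savings over this baseline add up. Gluing q \<times> q shifted copies
  of the good partition of K_a \<times> K_b along a grid of vertex intervals therefore saves q^2
  blocks for K_n \<times> K_n as soon as q \<cdot> max a b < n, which gives
  g(n) \<le> (n - 1)^2 - q^2 \<le> (1 - 1 / (max a b)^2) n^2.\<close>

definition complete_edges :: "'a set \<Rightarrow> 'a set set" where
  "complete_edges V = {{i, j} | i j. i \<in> V \<and> j \<in> V \<and> i \<noteq> j}"

definition has_block_partition :: "'a set set \<Rightarrow> 'b set set \<Rightarrow> nat \<Rightarrow> bool" where
  "has_block_partition E1 E2 k \<longleftrightarrow> (\<exists>P. is_block_partition E1 E2 P \<and> card P \<le> k)"

definition has_biclique_partition :: "'a set set \<Rightarrow> nat \<Rightarrow> bool" where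
  "has_biclique_partition E k \<longleftrightarrow>
     (\<exists>Q. finite Q \<and> (\<forall>F\<in>Q. is_cbip E F) \<and> pairwise disjnt Q \<and> \<Union>Q = E \<and> card Q \<le> k)"

lemma K_edges_eq_complete_edges: "K_edges n = complete_edges {0..<n}"
  unfolding K_edges_def complete_edges_def by auto

lemma gGH_le: "has_block_partition E1 E2 k \<Longrightarrow> gGH E1 E2 \<le> k"
  unfolding has_block_partition_def gGH_def by (metis (mono_tags, lifting) Least_le le_trans)

lemma has_block_partition_gGH:
  "has_block_partition E1 E2 k \<Longrightarrow> has_block_partition E1 E2 (gGH E1 E2)"
  unfolding has_block_partition_def gGH_def by (rule exE, assumption, rule LeastI2_ex, auto)

lemma is_cbip_mono: "is_cbip E F \<Longrightarrow> E \<subseteq> E' \<Longrightarrow> is_cbip E' F"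
  unfolding is_cbip_def by (metis order_trans)

lemma is_block_mono:
  "is_block E1 E2 B \<Longrightarrow> E1 \<subseteq> E1' \<Longrightarrow> E2 \<subseteq> E2' \<Longrightarrow> is_block E1' E2' B"
  unfolding is_block_def using is_cbip_mono by metis

lemma is_block_partition_Un:
  assumes P: "is_block_partition E F P" and P': "is_block_partition E F' P'"
    and disj: "F \<inter> F' = {}"
  shows "is_block_partition E (F \<union> F') (P \<union> P')"
proof -
  have "disjnt (E \<times> F) (E \<times> F')"
    using disj unfolding disjnt_def by auto
  then have "disjnt B B'" if "B \<in> P" "B' \<in> P'" for B B'
    using that P P' Union_upper unfolding is_block_partition_def
    by (metis disjnt_subset1 disjnt_subset2)
  then have "pairwise disjnt (P \<union> P')"
    using P P' unfolding is_block_partition_def pairwise_def by (metis Un_iff disjnt_sym)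
  moreover have "is_block E (F \<union> F') B" if "B \<in> P \<union> P'" for B
    using that P P' unfolding is_block_partition_def
    by (metis Un_iff Un_upper1 Un_upper2 is_block_mono order_refl)
  ultimately show ?thesis
    using P P' unfolding is_block_partition_def by auto
qed

lemma has_block_partition_Un:
  assumes "has_block_partition E F k" "has_block_partition E F' k'" "F \<inter> F' = {}"
  shows "has_block_partition E (F \<union> F') (k + k')"
proof -
  obtain P P' where "is_block_partition E F P" "card P \<le> k"
    and "is_block_partition E F' P'" "card P' \<le> k'"
    using assms(1,2) unfolding has_block_partition_def by blast
  with assms(3) show ?thesis
    unfolding has_block_partition_def
    by (intro exI[of _ "P \<union> P'"] conjI is_block_partition_Un)
       (auto intro: order_trans[OF card_Un_le])
qed

lemma has_block_partition_swap:
  assumes "has_block_partition E1 E2 k"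
  shows "has_block_partition E2 E1 k"
proof -
  obtain P where P: "is_block_partition E1 E2 P" "card P \<le> k"
    using assms unfolding has_block_partition_def by blast
  define P' where "P' = image prod.swap ` P"
  have "is_block E2 E1 (prod.swap ` B)" if "B \<in> P" for B
    using that P(1) unfolding is_block_partition_def is_block_def by (metis product_swap)
  moreover have "pairwise disjnt P'"
    using P(1) unfolding P'_def is_block_partition_def
    by (intro pairwise_imageI) (auto simp: pairwise_def disjnt_def simp flip: image_Int)
  moreover have "\<Union>P' = E2 \<times> E1"
    using P(1) unfolding P'_def is_block_partition_def
    by (auto simp: image_Union[symmetric] product_swap)
  moreover have "card P' \<le> k"
    using P card_image_le unfolding P'_def is_block_partition_def by (metis le_trans)
  ultimately show ?thesis
    using P(1) unfolding has_block_partition_def is_block_partition_def P'_def by blast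
qed

lemma has_block_partition_times:
  assumes "has_biclique_partition E1 k1" "has_biclique_partition E2 k2"
  shows "has_block_partition E1 E2 (k1 * k2)"
proof -
  obtain Q1 where Q1: "finite Q1" "\<forall>F\<in>Q1. is_cbip E1 F" "pairwise disjnt Q1" "\<Union>Q1 = E1"
      "card Q1 \<le> k1"
    using assms(1) unfolding has_biclique_partition_def by blast
  obtain Q2 where Q2: "finite Q2" "\<forall>F\<in>Q2. is_cbip E2 F" "pairwise disjnt Q2" "\<Union>Q2 = E2"
      "card Q2 \<le> k2"
    using assms(2) unfolding has_biclique_partition_def by blast
  define P where "P = (\<lambda>(F1, F2). F1 \<times> F2) ` (Q1 \<times> Q2)"
  have "disjnt (A1 \<times> A2) (B1 \<times> B2)"
    if "A1 \<in> Q1" "A2 \<in> Q2" "B1 \<in> Q1" "B2 \<in> Q2" "A1 \<times> A2 \<noteq> B1 \<times> B2" for A1 A2 B1 B2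
  proof -
    have "disjnt A1 B1 \<or> disjnt A2 B2"
      using that Q1(3) Q2(3) unfolding pairwise_def by blast
    then show ?thesis unfolding disjnt_def by auto
  qed
  then have "pairwise disjnt P"
    unfolding P_def by (intro pairwise_imageI) (clarify, blast)
  then have "is_block_partition E1 E2 P"
    using Q1 Q2 unfolding is_block_partition_def is_block_def P_def by auto
  moreover have "card P \<le> k1 * k2"
  proof -
    have "card P \<le> card Q1 * card Q2"
      unfolding P_def using card_image_le[of "Q1 \<times> Q2"] Q1(1) Q2(1)
      by (simp add: card_cartesian_product)
    also have "\<dots> \<le> k1 * k2" using Q1(5) Q2(5) by (rule mult_le_mono)
    finally show ?thesis .
  qed
  ultimately show ?thesis unfolding has_block_partition_def by blast
qed

lemma complete_edges_singleton: "complete_edges {x} = {}"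
  unfolding complete_edges_def by auto

lemma complete_edges_mono: "U \<subseteq> W \<Longrightarrow> complete_edges U \<subseteq> complete_edges W"
  unfolding complete_edges_def by blast

lemma complete_edges_Un:
  assumes "U \<inter> W = {}"
  shows "complete_edges (U \<union> W) = complete_edges U \<union> complete_edges W \<union> cbip_edges U W"
  using assms unfolding complete_edges_def cbip_edges_def by (auto, blast+)

lemma complete_edges_disjoint:
  assumes "U \<inter> W = {}"
  shows "complete_edges U \<inter> complete_edges W = {}"
    and "(complete_edges U \<union> complete_edges W) \<inter> cbip_edges U W = {}"
  using assms unfolding complete_edges_def cbip_edges_def by (auto simp: doubleton_eq_iff)

lemma is_cbip_complete_edges:
  assumes "U \<inter> W = {}" "U \<noteq> {}" "W \<noteq> {}"
  shows "is_cbip (complete_edges (U \<union> W)) (cbip_edges U W)"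
  using assms complete_edges_Un[OF assms(1)] unfolding is_cbip_def by blast

lemma has_biclique_partition_cbip_edges:
  assumes "U \<inter> W = {}" "U \<noteq> {}" "W \<noteq> {}"
  shows "has_biclique_partition (cbip_edges U W) 1"
  using assms unfolding has_biclique_partition_def is_cbip_def
  by (intro exI[of _ "{cbip_edges U W}"]) auto

text \<open>Each vertex contributes the star to the vertices added before it.\<close>

lemma has_biclique_partition_complete_edges:
  assumes "finite V" "V \<noteq> {}"
  shows "has_biclique_partition (complete_edges V) (card V - 1)"
  using assms
proof (induction V rule: finite_ne_induct)
  case (singleton x)
  then show ?case
    unfolding has_biclique_partition_def complete_edges_singleton by (intro exI[of _ "{}"]) auto
next
  case (insert x F)
  obtain Q where Q: "finite Q" "\<forall>G\<in>Q. is_cbip (complete_edges F) G" "pairwise disjnt Q"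
      "\<Union>Q = complete_edges F" "card Q \<le> card F - 1"
    using insert.IH unfolding has_biclique_partition_def by blast
  have dj: "F \<inter> {x} = {}" and ins: "insert x F = F \<union> {x}"
    using insert.hyps by auto
  define star where "star = cbip_edges F {x}"
  have split: "complete_edges (insert x F) = complete_edges F \<union> star"
    unfolding ins complete_edges_Un[OF dj] complete_edges_singleton star_def by simp
  have "is_cbip (complete_edges (insert x F)) star"
    unfolding ins star_def by (rule is_cbip_complete_edges[OF dj]) (use insert.hyps in auto)
  moreover have "is_cbip (complete_edges (insert x F)) G" if "G \<in> Q" for G
    using is_cbip_mono[OF bspec[OF Q(2) that] complete_edges_mono[OF subset_insertI]] .
  moreover have "\<forall>G\<in>Q. disjnt star G"
    using Q(4) complete_edges_disjoint(2)[OF dj] unfolding star_def disjnt_def by blast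
  then have "pairwise disjnt (insert star Q)"
    using Q(3) unfolding pairwise_insert by (auto intro: disjnt_sym)
  moreover have "card (insert star Q) \<le> card (insert x F) - 1"
    using Q(1,5) insert.hyps card_gt_0_iff[of F] by (auto simp: card_insert_if)
  ultimately show ?case
    unfolding has_biclique_partition_def split using Q(1,4)
    by (intro exI[of _ "insert star Q"]) auto
qed

lemma cbip_edges_image:
  "inj f \<Longrightarrow> image f ` cbip_edges X Y = cbip_edges (f ` X) (f ` Y)"
  unfolding cbip_edges_def by (auto simp: image_def)

lemma complete_edges_image:
  "inj f \<Longrightarrow> image f ` complete_edges V = complete_edges (f ` V)"
  unfolding complete_edges_def inj_def by (auto simp: image_def)

lemma is_cbip_image:
  assumes "inj f" "is_cbip E F"
  shows "is_cbip (image f ` E) (image f ` F)"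
proof -
  obtain X Y where XY: "X \<noteq> {}" "Y \<noteq> {}" "X \<inter> Y = {}" "cbip_edges X Y \<subseteq> E"
      "F = cbip_edges X Y"
    using assms(2) unfolding is_cbip_def by blast
  moreover have "f ` X \<inter> f ` Y = {}"
    using XY(3) image_Int[OF assms(1), of X Y] by simp
  moreover have "image f ` F = cbip_edges (f ` X) (f ` Y)"
    "cbip_edges (f ` X) (f ` Y) \<subseteq> image f ` E"
    using XY(4,5) cbip_edges_image[OF assms(1), of X Y] by (metis image_mono)+
  ultimately show ?thesis
    unfolding is_cbip_def by (intro exI[of _ "f ` X"] exI[of _ "f ` Y"]) simp
qed

lemma has_block_partition_image:
  assumes "has_block_partition E1 E2 k" "inj f" "inj h"
  shows "has_block_partition (image f ` E1) (image h ` E2) k"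
proof -
  obtain P where P: "is_block_partition E1 E2 P" "card P \<le> k"
    using assms(1) unfolding has_block_partition_def by blast
  define \<phi> where "\<phi> = map_prod (image f) (image h)"
  have inj_\<phi>: "inj \<phi>"
    unfolding \<phi>_def using assms(2,3) by (simp add: map_prod_inj_on inj_def inj_image_eq_iff)
  have \<phi>_times: "\<phi> ` (A \<times> B) = (image f ` A) \<times> (image h ` B)" for A B
    unfolding \<phi>_def by (rule map_prod_surj_on) auto
  define P' where "P' = image \<phi> ` P"
  have "is_block (image f ` E1) (image h ` E2) (\<phi> ` B)" if "B \<in> P" for B
    using that P(1) is_cbip_image[OF assms(2)] is_cbip_image[OF assms(3)]
    unfolding is_block_partition_def is_block_def by (metis \<phi>_times)
  moreover have "pairwise disjnt P'"
    using P(1) unfolding P'_def is_block_partition_def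
    by (intro pairwise_imageI) (auto simp: pairwise_def disjnt_def simp flip: image_Int[OF inj_\<phi>])
  moreover have "\<Union>P' = (image f ` E1) \<times> (image h ` E2)"
    using P(1) unfolding P'_def is_block_partition_def by (metis image_Union \<phi>_times)
  moreover have "card P' \<le> k"
    using P card_image_le unfolding P'_def is_block_partition_def by (metis le_trans)
  ultimately show ?thesis
    using P(1) unfolding has_block_partition_def is_block_partition_def P'_def by blast
qed

text \<open>The baseline (|V| - 1)(|W| - 1) is the number of blocks in the product of two star
  partitions (lemma saving_0).\<close>

definition saving :: "'a set \<Rightarrow> 'b set \<Rightarrow> nat \<Rightarrow> bool" where
  "saving V W s \<longleftrightarrow> (\<exists>k. has_block_partition (complete_edges V) (complete_edges W) k
      \<and> k + s \<le> (card V - 1) * (card W - 1))"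

lemma saving_0:
  assumes "finite V" "V \<noteq> {}" "finite W" "W \<noteq> {}"
  shows "saving V W 0"
  using has_block_partition_times[OF has_biclique_partition_complete_edges[OF assms(1,2)]
      has_biclique_partition_complete_edges[OF assms(3,4)]]
  unfolding saving_def by auto

lemma saving_swap: "saving V W s \<Longrightarrow> saving W V s"
  unfolding saving_def by (metis has_block_partition_swap mult.commute)

lemma saving_Un_right:
  assumes V: "finite V" "V \<noteq> {}" and W: "finite W" "W \<noteq> {}" and B: "finite B" "B \<noteq> {}"
    and disj: "W \<inter> B = {}" and "saving V W s" "saving V B t"
  shows "saving V (W \<union> B) (s + t)"
proof -
  obtain k1 k2 where
    k1: "has_block_partition (complete_edges V) (complete_edges W) k1"
        "k1 + s \<le> (card V - 1) * (card W - 1)" and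
    k2: "has_block_partition (complete_edges V) (complete_edges B) k2"
        "k2 + t \<le> (card V - 1) * (card B - 1)"
    using assms(8,9) unfolding saving_def by blast
  have cross: "has_block_partition (complete_edges V) (cbip_edges W B) ((card V - 1) * 1)"
    using V W B disj
    by (intro has_block_partition_times has_biclique_partition_complete_edges
        has_biclique_partition_cbip_edges)
  have "has_block_partition (complete_edges V) (complete_edges (W \<union> B))
      (k1 + k2 + (card V - 1) * 1)"
    unfolding complete_edges_Un[OF disj]
    using complete_edges_disjoint[OF disj]
    by (intro has_block_partition_Un[OF has_block_partition_Un[OF k1(1) k2(1)] cross])
  moreover have "k1 + k2 + (card V - 1) * 1 + (s + t) \<le> (card V - 1) * (card (W \<union> B) - 1)"
  proof -
    have "card W > 0" "card B > 0"
      using W B by (simp_all add: card_gt_0_iff)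
    then have "card (W \<union> B) - 1 = (card W - 1) + (card B - 1) + 1"
      using W B disj by (simp add: card_Un_disjoint)
    then show ?thesis using k1(2) k2(2) by (simp add: algebra_simps)
  qed
  ultimately show ?thesis unfolding saving_def by blast
qed

lemma saving_mono_right:
  assumes "finite V" "V \<noteq> {}" "W \<noteq> {}" "W \<subseteq> W'" "finite W'" "saving V W s"
  shows "saving V W' s"
proof (cases "W' = W")
  case False
  then have "saving V (W \<union> (W' - W)) (s + 0)"
    using assms by (intro saving_Un_right saving_0) (auto intro: finite_subset)
  then show ?thesis using assms(4) by (simp add: Un_absorb1)
qed (use assms in simp)

lemma saving_mono_left:
  assumes "finite W" "W \<noteq> {}" "V \<noteq> {}" "V \<subseteq> V'" "finite V'" "saving V W s"
  shows "saving V' W s"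
  using saving_mono_right[OF assms(1-5) saving_swap[OF assms(6)]] by (rule saving_swap)

lemma saving_shifted_copy:
  assumes "gGH (K_edges a) (K_edges b) < (a - 1) * (b - 1)"
  shows "saving {p..<p+a} {q..<q+b} 1"
proof -
  have "0 < a" "0 < b"
    using assms by (auto intro: Nat.gr0I)
  then have "has_block_partition (complete_edges {0..<a}) (complete_edges {0..<b})
      ((card {0..<a} - 1) * (card {0..<b} - 1))"
    by (intro has_block_partition_times has_biclique_partition_complete_edges) auto
  then have "has_block_partition (complete_edges {0..<a}) (complete_edges {0..<b})
      (gGH (K_edges a) (K_edges b))"
    unfolding K_edges_eq_complete_edges by (rule has_block_partition_gGH)
  from has_block_partition_image[OF this, of "plus p" "plus q"]
  have "has_block_partition (complete_edges {p..<p+a}) (complete_edges {q..<q+b})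
      (gGH (K_edges a) (K_edges b))"
    by (simp add: complete_edges_image add.commute)
  then show ?thesis
    unfolding saving_def using assms by (intro exI[of _ "gGH (K_edges a) (K_edges b)"]) simp
qed

lemma saving_intervals_right:
  assumes "finite V" "V \<noteq> {}" "0 < b" "\<And>q. saving V {q..<q+b} s"
  shows "saving V {0..<1+k*b} (k*s)"
proof (induction k)
  case 0
  show ?case using saving_0[OF assms(1,2), of "{0::nat}"] by simp
next
  case (Suc k)
  have "saving V ({0..<1+k*b} \<union> {1+k*b..<1+k*b+b}) (k*s + s)"
    by (rule saving_Un_right[OF assms(1,2) _ _ _ _ _ Suc.IH assms(4)]) (use assms(3) in auto)
  moreover have "{0..<1+k*b} \<union> {1+k*b..<1+k*b+b} = {0..<1 + Suc k * b}"
    by (subst ivl_disj_un_two(3)) (auto simp: add.assoc)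
  ultimately show ?case by (simp add: add.commute)
qed

lemma saving_intervals_left:
  assumes "finite W" "W \<noteq> {}" "0 < a" "\<And>p. saving {p..<p+a} W s"
  shows "saving {0..<1+j*a} W (j*s)"
  using saving_intervals_right[OF assms(1-3) saving_swap[OF assms(4)]] by (rule saving_swap)

lemma saving_grid:
  assumes "gGH (K_edges a) (K_edges b) < (a - 1) * (b - 1)"
  shows "saving {0..<1+j*a} {0..<1+k*b} (j*k)"
proof -
  have "0 < a" "0 < b"
    using assms by (auto intro: Nat.gr0I)
  then have "saving {p..<p+a} {0..<1+k*b} k" for p
    using saving_intervals_right[of "{p..<p+a}" b 1 k] saving_shifted_copy[OF assms] by simp
  then show ?thesis
    using saving_intervals_left[of "{0..<1+k*b}" a k j] \<open>0 < a\<close> by simp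
qed

lemma g_add_saving_le: "saving {0..<n} {0..<n} s \<Longrightarrow> g n + s \<le> (n - 1) * (n - 1)"
  unfolding saving_def g_def K_edges_eq_complete_edges by (auto dest: gGH_le)

lemma g_0: "g 0 = 0"
proof -
  have "is_block_partition (K_edges 0) (K_edges 0) {}"
    unfolding is_block_partition_def K_edges_def by simp
  then have "has_block_partition (K_edges 0) (K_edges 0) 0"
    unfolding has_block_partition_def by (intro exI[of _ "{}"]) simp
  then show ?thesis
    unfolding g_def using gGH_le by fastforce
qed

lemma g_add_square_le:
  assumes hyp: "gGH (K_edges a) (K_edges b) < (a - 1) * (b - 1)"
    and qa: "q * a < n" and qb: "q * b < n"
  shows "g n + (q + 1)^2 \<le> n^2"
proof -
  have "0 < a" "0 < n"
    using hyp qa by (auto intro: Nat.gr0I)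
  have "saving {0..<1+q*a} {0..<1+q*b} (q*q)"
    by (rule saving_grid[OF hyp])
  then have "saving {0..<1+q*a} {0..<n} (q*q)"
    by (rule saving_mono_right[rotated 5]) (use qb in auto)
  then have "saving {0..<n} {0..<n} (q*q)"
    by (rule saving_mono_left[rotated 5]) (use qa \<open>0 < n\<close> in auto)
  then have "g n + q*q \<le> (n - 1) * (n - 1)"
    by (rule g_add_saving_le)
  moreover have "q \<le> q * a"
    using \<open>0 < a\<close> by simp
  moreover have "(q + 1)^2 = q * q + 2 * q + 1" "n^2 = (n - 1) * (n - 1) + 2 * (n - 1) + 1"
    using \<open>0 < n\<close> by (cases n, simp_all add: power2_eq_square)+
  ultimately show ?thesis
    using qa by linarith
qed

lemma le_square_gap:
  fixes G n r m :: real
  assumes "G + r^2 \<le> n^2" "n \<le> m * r" "0 \<le> n" "0 < m"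
  shows "G \<le> (1 - 1 / m^2) * n^2"
proof -
  have "n^2 \<le> m^2 * r^2"
    using power_mono[OF assms(2,3), of 2] by (simp add: power_mult_distrib)
  then have "n^2 / m^2 \<le> r^2"
    using assms(4) by (simp add: divide_le_eq mult.commute)
  then show ?thesis
    using assms(1) by (simp add: algebra_simps)
qed

theorem mainTheorem4:
  fixes a b :: nat
  assumes "0 < a" and "0 < b"
    and "gGH (K_edges a) (K_edges b) < (a - 1) * (b - 1)"
  shows "\<exists>\<beta>::real. \<beta> < 1 \<and> (\<forall>n::nat. real (g n) \<le> \<beta> * (real n)^2)"
proof (intro exI conjI allI)
  define m where "m = max a b"
  have "0 < m"
    using assms(1) unfolding m_def by simp
  then show "1 - 1 / (real m)^2 < 1"
    by simp
  fix n :: nat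
  show "real (g n) \<le> (1 - 1 / (real m)^2) * (real n)^2"
  proof (cases "n = 0")
    case False
    define q where "q = (n - 1) div m"
    have "q * m < n"
      using False unfolding q_def
      by (metis div_times_less_eq_dividend le_less_trans diff_less zero_less_one neq0_conv)
    then have "q * a < n" "q * b < n"
      unfolding m_def by (meson le_less_trans max.cobounded1 max.cobounded2 mult_le_mono2)+
    then have "g n + (q + 1)^2 \<le> n^2"
      by (rule g_add_square_le[OF assms(3)])
    moreover have "n \<le> m * (q + 1)"
      using dividend_less_times_div[OF \<open>0 < m\<close>, of "n - 1"] unfolding q_def by simp
    ultimately show ?thesis
      using \<open>0 < m\<close> le_square_gap[of "real (g n)" "real (q + 1)" "real n" "real m"]
      by (simp only: of_nat_add[symmetric] of_nat_power[symmetric] of_nat_mult[symmetric]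
          of_nat_le_iff)
  qed (simp add: g_0)
qed

end
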